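(* Let $\upsilon\in(0,1]$, $P_b>0$, $h>0$, $T_c>0$, $\sigma^2>0$, $B>0$, $R\ge 0$ and $\ell>0$. Define $E_{\mathrm{MPT}}(t)=\upsilon P_bh(T_c-t)$ and $E_{\mathrm{off}}(t)=(2^{\frac{\ell}{Bt}}-1)\frac{\sigma^2}{h}t$, and consider Problem P8: maximize $E_{\mathrm{MPT}}(t)-E_{\mathrm{off}}(t)$ over $t$ subject to $0<t\le T_c$ and $R+E_{\mathrm{MPT}}(t)-E_{\mathrm{off}}(t)\ge 0$. Let $t^*$ be the optimal $t$ and $G_{\mathrm{off}}(\ell,R,h)=E_{\mathrm{MPT}}(t^* )-E_{\mathrm{off}}(t^* )$. With $W$ the principal branch of the Lambert function ($W(x)e^{W(x)}=x$) and $w=W\!\left(\frac{\upsilon P_bh^2}{\sigma^2e}-\frac1e\right)$, define $$\rho(h)=\frac{\ln 2}{B(1+w)},\quad y(h)=\frac{\sigma^2\ln 2}{Bh}e^{w+1},\quad c=\frac{T_cB(1+w)}{\ln 2},\quad c'=BT_c\log_2\!\left(1+\frac{Rh}{\sigma^2T_c}\right).$$ Then: (1) if either (a) $R\le\frac{BT_cy(h)}{\ln2}-\frac{\sigma^2}{h}T_c$ and $\ell\le\frac{\upsilon P_bhT_c+R}{y(h)}$, or (b) $R>\frac{BT_cy(h)}{\ln2}-\frac{\sigma^2}{h}T_c$ and $\ell<c$, then $t^*=\rho(h)\ell$ and $G_{\mathrm{off}}(\ell,R,h)=\upsilon P_bhT_c-y(h)\ell$; (2) if $R>\frac{BT_cy(h)}{\ln2}-\frac{\sigma^2}{h}T_c$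 and $c\le\ell\le c'$, then $t^*=T_c$ and $G_{\mathrm{off}}(\ell,R,h)=-(2^{\frac{\ell}{BT_c}}-1)\frac{\sigma^2}{h}T_c$; (3) for all other combinations of $R$ and $\ell$, Problem P8 is infeasible.
   Context: This concerns offloading in a single fading block of duration $T_c$ with channel power gain $h$: $\ell$ bits are to be offloaded, $R$ is residual energy carried over from previous blocks, the block is split into power transfer of length $T_c-t$ and transmission of length $t$ at fixed rate over bandwidth $B$ with noise variance $\sigma^2$, $\upsilon$ is the energy conversion efficiency and $P_b$ the base-station transmit power. *)

theory Defs
  imports "HOL-Analysis.Analysis"
begin

text \<open>Principal branch of the Lambert W function on [-1/e, \<infinity>):
  the unique w \<ge> -1 with w * exp w = x.\<close>
definition lambertW :: "real \<Rightarrow> real" where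
  "lambertW x = (THE w. w \<ge> -1 \<and> w * exp w = x)"

definition E_MPT :: "real \<Rightarrow> real \<Rightarrow> real \<Rightarrow> real \<Rightarrow> real \<Rightarrow> real" where
  "E_MPT \<upsilon> Pb h Tc t = \<upsilon> * Pb * h * (Tc - t)"

definition E_off :: "real \<Rightarrow> real \<Rightarrow> real \<Rightarrow> real \<Rightarrow> real \<Rightarrow> real" where
  "E_off B \<sigma>2 h l t = (2 powr (l / (B * t)) - 1) * (\<sigma>2 / h) * t"

definition P8_obj :: "real \<Rightarrow> real \<Rightarrow> real \<Rightarrow> real \<Rightarrow> real \<Rightarrow> real \<Rightarrow> real \<Rightarrow> real \<Rightarrow> real" where
  "P8_obj \<upsilon> Pb h Tc B \<sigma>2 l t = E_MPT \<upsilon> Pb h Tc t - E_off B \<sigma>2 h l t"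

definition P8_feasible :: "real \<Rightarrow> real \<Rightarrow> real \<Rightarrow> real \<Rightarrow> real \<Rightarrow> real \<Rightarrow> real \<Rightarrow> real \<Rightarrow> real \<Rightarrow> bool" where
  "P8_feasible \<upsilon> Pb h Tc B \<sigma>2 R l t \<longleftrightarrow>
     0 < t \<and> t \<le> Tc \<and> R + E_MPT \<upsilon> Pb h Tc t - E_off B \<sigma>2 h l t \<ge> 0"

definition P8_opt :: "real \<Rightarrow> real \<Rightarrow> real \<Rightarrow> real \<Rightarrow> real \<Rightarrow> real \<Rightarrow> real \<Rightarrow> real \<Rightarrow> real \<Rightarrow> bool" where
  "P8_opt \<upsilon> Pb h Tc B \<sigma>2 R l t \<longleftrightarrow>
     P8_feasible \<upsilon> Pb h Tc B \<sigma>2 R l t \<and>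
     (\<forall>s. P8_feasible \<upsilon> Pb h Tc B \<sigma>2 R l s \<longrightarrow>
          P8_obj \<upsilon> Pb h Tc B \<sigma>2 l s \<le> P8_obj \<upsilon> Pb h Tc B \<sigma>2 l t)"

definition G_off :: "real \<Rightarrow> real \<Rightarrow> real \<Rightarrow> real \<Rightarrow> real \<Rightarrow> real \<Rightarrow> real \<Rightarrow> real \<Rightarrow> real" where
  "G_off \<upsilon> Pb Tc B \<sigma>2 l R h =
     P8_obj \<upsilon> Pb h Tc B \<sigma>2 l (THE t. P8_opt \<upsilon> Pb h Tc B \<sigma>2 R l t)"

end

theory Submission
  imports Defs
begin

text \<open>The Lambert parameter \<open>w\<close> eliminates \<open>Pb\<close> through
  \<open>\<upsilon> Pb h = \<sigma>2 / h * (1 + w * exp (w + 1))\<close>. Maximising the objective then means minimising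
  \<open>t * (w * exp (w + 1) + exp (K / t))\<close> with \<open>K = l ln 2 / B\<close>, i.e.
  \<open>K * (w * exp (w + 1) + exp x) / x\<close> in \<open>x = K / t\<close>. The tangent of \<open>exp\<close> at \<open>1 + w\<close> shows
  that this is minimal exactly at \<open>x = 1 + w\<close>, i.e. \<open>t = \<rho> l\<close>, and it increases for
  \<open>x \<ge> 1 + w\<close>. So on \<open>(0, Tc]\<close> the objective has the unique maximiser \<open>min (\<rho> l) Tc\<close>;
  Problem P8 is solved there when the energy constraint holds there and is infeasible otherwise.
  The thresholds of the statement are these two comparisons written out.\<close>

lemma add_one_less_exp:
  fixes x :: real
  assumes "x \<noteq> 0"
  shows "1 + x < exp x"
proof (cases "0 \<le> 1 + x / 2")
  case True
  have "(1 + x / 2)\<^sup>2 \<le> exp (x / 2) ^ 2"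
    using True exp_ge_add_one_self[of "x / 2"] by (simp add: power_mono)
  also have "\<dots> = exp x" by (simp add: power2_eq_square flip: exp_add)
  moreover have "0 < x\<^sup>2" using assms by simp
  ultimately show ?thesis by (simp add: power2_eq_square field_simps)
next
  case False
  then show ?thesis using exp_gt_zero[of x] by linarith
qed

lemma exp_tangent_le:
  fixes a x :: real
  shows "exp a * (1 + (x - a)) \<le> exp x"
proof -
  have "exp a * (1 + (x - a)) \<le> exp a * exp (x - a)"
    by (intro mult_left_mono) auto
  then show ?thesis by (simp flip: exp_add)
qed

lemma exp_tangent_less:
  fixes a x :: real
  assumes "x \<noteq> a"
  shows "exp a * (1 + (x - a)) < exp x"
proof -
  have "exp a * (1 + (x - a)) < exp a * exp (x - a)"
    using assms add_one_less_exp[of "x - a"] by simp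
  then show ?thesis by (simp flip: exp_add)
qed

lemma mult_exp_strict_mono:
  fixes u v :: real
  assumes "-1 \<le> u" "u < v"
  shows "u * exp u < v * exp v"
proof (rule DERIV_pos_imp_increasing_open[OF \<open>u < v\<close>])
  fix x assume "u < x" "x < v"
  then have "0 < (1 + x) * exp x" using assms by simp
  moreover have "((\<lambda>x. x * exp x) has_real_derivative (1 + x) * exp x) (at x)"
    by (auto intro!: derivative_eq_intros simp: algebra_simps)
  ultimately show "\<exists>y. ((\<lambda>x. x * exp x) has_real_derivative y) (at x) \<and> 0 < y"
    by blast
qed (intro continuous_intros)

lemma lambertW_principal_branch:
  fixes x :: real
  assumes "-1 / exp 1 < x"
  shows "-1 < lambertW x" and "lambertW x * exp (lambertW x) = x"
proof -
  define b where "b = max 1 x"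
  have "(-1) * exp (-1) \<le> x" using assms by (simp add: exp_minus field_simps)
  moreover have "x \<le> b * exp b"
    using mult_left_mono[of 1 "exp b" b] by (simp add: b_def)
  moreover have "-1 \<le> b" by (simp add: b_def)
  ultimately obtain w where w: "-1 \<le> w" "w * exp w = x"
    using IVT[of "\<lambda>w. w * exp w" "-1" x b] by (auto intro!: continuous_intros)
  have "lambertW x = w"
    unfolding lambertW_def
  proof (rule the_equality)
    fix v assume "-1 \<le> v \<and> v * exp v = x"
    then show "v = w"
      using w mult_exp_strict_mono[of v w] mult_exp_strict_mono[of w v]
      by (cases v w rule: linorder_cases) auto
  qed (use w in simp)
  moreover have "w \<noteq> -1"
    using assms w by (auto simp: exp_minus divide_inverse)
  ultimately show "-1 < lambertW x" "lambertW x * exp (lambertW x) = x"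
    using w by auto
qed

lemma exp_ratio_strict_mono:
  fixes c x X :: real
  assumes "0 < X" "X < x" "c \<le> exp X * (X - 1)"
  shows "(c + exp X) / X < (c + exp x) / x"
proof -
  have "X * (exp X * (1 + (x - X))) < X * exp x"
    using assms exp_tangent_less[of x X] by simp
  moreover have "c * (x - X) \<le> exp X * (X - 1) * (x - X)"
    using assms by (intro mult_right_mono) auto
  ultimately have "x * (c + exp X) < X * (c + exp x)"
    by (simp add: algebra_simps)
  then show ?thesis
    using assms by (simp add: field_simps)
qed

text \<open>If \<open>\<upsilon> Pb h = \<sigma>2 / h * (1 + w * exp (w + 1))\<close> and \<open>K = l ln 2 / B\<close>, then the energy
  \<open>E_off t\<close> spent plus the energy \<open>\<upsilon> Pb h t\<close> not harvested during transmission time \<open>t\<close>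
  is \<open>\<sigma>2 / h * scaled_tx_cost w K t\<close>.\<close>
definition scaled_tx_cost :: "real \<Rightarrow> real \<Rightarrow> real \<Rightarrow> real" where
  "scaled_tx_cost w K t = t * (w * exp (w + 1) + exp (K / t))"

lemma scaled_tx_cost_at_opt:
  assumes "1 + w \<noteq> 0"
  shows "scaled_tx_cost w K (K / (1 + w)) = K * exp (w + 1)"
  using assms by (cases "K = 0") (simp_all add: scaled_tx_cost_def field_simps)

lemma scaled_tx_cost_lower_bound:
  assumes "0 < t"
  shows "K * exp (w + 1) \<le> scaled_tx_cost w K t"
    and "-1 < w \<Longrightarrow> t \<noteq> K / (1 + w) \<Longrightarrow> K * exp (w + 1) < scaled_tx_cost w K t"
proof -
  define x where "x = K / t"
  have K: "K = t * x" and cost: "scaled_tx_cost w K t = t * (w * exp (w + 1) + exp x)"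
    using assms by (simp_all add: x_def scaled_tx_cost_def)
  have "t * (exp (w + 1) * (1 + (x - (w + 1)))) \<le> t * exp x"
    using assms exp_tangent_le[of "w + 1" x] by simp
  then show "K * exp (w + 1) \<le> scaled_tx_cost w K t"
    unfolding cost using K by (simp add: algebra_simps)
  assume "-1 < w" "t \<noteq> K / (1 + w)"
  then have "x \<noteq> w + 1" using assms by (auto simp: x_def field_simps)
  then have "t * (exp (w + 1) * (1 + (x - (w + 1)))) < t * exp x"
    using assms exp_tangent_less[of x "w + 1"] by simp
  then show "K * exp (w + 1) < scaled_tx_cost w K t"
    unfolding cost using K by (simp add: algebra_simps)
qed

lemma scaled_tx_cost_strict_antimono:
  assumes "-1 < w" "0 < t" "t < u" "u \<le> K / (1 + w)"
  shows "scaled_tx_cost w K u < scaled_tx_cost w K t"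
proof -
  define X where "X = K / u"
  define x where "x = K / t"
  have "0 < K" using assms by (smt (verit) divide_nonpos_pos)
  then have X: "1 + w \<le> X" and "X < x" and "0 < X"
    using assms by (auto simp: X_def x_def field_simps divide_strict_left_mono)
  \<comment> \<open>\<open>exp x * (x - 1) = e * ((x - 1) * exp (x - 1))\<close> is increasing on \<open>[0, \<infinity>)\<close>.\<close>
  have "w * exp w \<le> (X - 1) * exp (X - 1)"
    using X assms mult_exp_strict_mono[of w "X - 1"] by (cases "w = X - 1") auto
  then have "w * exp (w + 1) \<le> exp X * (X - 1)"
    by (simp add: exp_add exp_diff field_simps)
  then have "(w * exp (w + 1) + exp X) / X < (w * exp (w + 1) + exp x) / x"
    using \<open>0 < X\<close> \<open>X < x\<close> by (intro exp_ratio_strict_mono)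
  then have "K * ((w * exp (w + 1) + exp X) / X) < K * ((w * exp (w + 1) + exp x) / x)"
    using \<open>0 < K\<close> by (rule mult_strict_left_mono)
  moreover have "u = K / X" "t = K / x" "K / u = X" "K / t = x"
    using assms \<open>0 < K\<close> by (auto simp: X_def x_def)
  ultimately show ?thesis
    by (simp add: scaled_tx_cost_def)
qed

lemma scaled_tx_cost_min_on_interval:
  assumes "-1 < w" "0 < t" "t \<le> T" "t \<noteq> min (K / (1 + w)) T"
  shows "scaled_tx_cost w K (min (K / (1 + w)) T) < scaled_tx_cost w K t"
proof (cases "K / (1 + w) \<le> T")
  case True
  then show ?thesis
    using assms scaled_tx_cost_lower_bound(2)[of t w K] scaled_tx_cost_at_opt[of w K] by simp
next
  case False
  then show ?thesis
    using assms scaled_tx_cost_strict_antimono[of w t T K] by simp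
qed

lemma P8_lambert_parameter:
  fixes \<upsilon> Pb h \<sigma>2 :: real
  assumes "0 < \<upsilon> * Pb" "0 < h" "0 < \<sigma>2"
  defines "w \<equiv> lambertW (\<upsilon> * Pb * h\<^sup>2 / (\<sigma>2 * exp 1) - 1 / exp 1)"
  shows "-1 < w" and "\<upsilon> * Pb * h = \<sigma>2 / h * (1 + w * exp (w + 1))"
proof -
  have "-1 / exp 1 < \<upsilon> * Pb * h\<^sup>2 / (\<sigma>2 * exp 1) - 1 / exp 1"
    using assms by simp
  note W = lambertW_principal_branch[OF this, folded w_def]
  show "-1 < w" by (fact W(1))
  have "w * exp (w + 1) = w * exp w * exp 1" by (simp add: exp_add)
  also have "\<dots> = \<upsilon> * Pb * h\<^sup>2 / \<sigma>2 - 1" using W(2) assms by (simp add: field_simps)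
  finally show "\<upsilon> * Pb * h = \<sigma>2 / h * (1 + w * exp (w + 1))"
    using assms by (simp add: field_simps power2_eq_square)
qed

lemma P8_obj_eq_scaled_tx_cost:
  assumes "\<upsilon> * Pb * h = \<sigma>2 / h * (1 + w * exp (w + 1))"
  shows "P8_obj \<upsilon> Pb h Tc B \<sigma>2 l t
           = \<upsilon> * Pb * h * Tc - \<sigma>2 / h * scaled_tx_cost w (ln 2 * l / B) t"
proof -
  have "2 powr (l / (B * t)) = exp (ln 2 * l / B / t)"
    by (simp add: powr_def field_simps)
  then have "P8_obj \<upsilon> Pb h Tc B \<sigma>2 l t
      = \<upsilon> * Pb * h * (Tc - t) - (exp (ln 2 * l / B / t) - 1) * (\<sigma>2 / h) * t"
    by (simp add: P8_obj_def E_MPT_def E_off_def)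
  also have "\<dots> = \<upsilon> * Pb * h * Tc - \<sigma>2 / h * scaled_tx_cost w (ln 2 * l / B) t"
    unfolding assms scaled_tx_cost_def by (simp add: algebra_simps flip: times_divide_eq_right)
  finally show ?thesis .
qed

lemma P8_obj_full_time:
  "P8_obj \<upsilon> Pb h Tc B \<sigma>2 l Tc = - (2 powr (l / (B * Tc)) - 1) * (\<sigma>2 / h) * Tc"
  by (simp add: P8_obj_def E_MPT_def E_off_def algebra_simps)

lemma P8_feasible_full_time_iff:
  assumes "0 < h" "0 < Tc" "0 < \<sigma>2" "0 < B" "0 \<le> R"
  shows "0 \<le> R + P8_obj \<upsilon> Pb h Tc B \<sigma>2 l Tc \<longleftrightarrow> l \<le> B * Tc * log 2 (1 + R * h / (\<sigma>2 * Tc))"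
proof -
  have pos: "0 < 1 + R * h / (\<sigma>2 * Tc)"
    using assms by (simp add: add_pos_nonneg)
  have "l \<le> B * Tc * log 2 (1 + R * h / (\<sigma>2 * Tc))
        \<longleftrightarrow> l / (B * Tc) \<le> log 2 (1 + R * h / (\<sigma>2 * Tc))"
    using assms by (simp add: field_simps)
  also have "\<dots> \<longleftrightarrow> 2 powr (l / (B * Tc)) \<le> 1 + R * h / (\<sigma>2 * Tc)"
    using le_log_iff[OF _ pos] by simp
  also have "\<dots> \<longleftrightarrow> 0 \<le> R + P8_obj \<upsilon> Pb h Tc B \<sigma>2 l Tc"
    using assms by (simp add: P8_obj_full_time field_simps)
  finally show ?thesis ..
qed

lemma P8_obj_maximum:
  fixes \<upsilon> Pb h Tc B \<sigma>2 l w :: real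
  assumes "-1 < w" "0 < \<sigma>2 / h" "\<upsilon> * Pb * h = \<sigma>2 / h * (1 + w * exp (w + 1))"
  defines "t0 \<equiv> ln 2 / (B * (1 + w)) * l"
  shows "P8_obj \<upsilon> Pb h Tc B \<sigma>2 l t0 = \<upsilon> * Pb * h * Tc - \<sigma>2 * ln 2 / (B * h) * exp (w + 1) * l"
    and "0 < t \<Longrightarrow> P8_obj \<upsilon> Pb h Tc B \<sigma>2 l t \<le> P8_obj \<upsilon> Pb h Tc B \<sigma>2 l t0"
    and "0 < t \<Longrightarrow> t \<le> Tc \<Longrightarrow> t \<noteq> min t0 Tc \<Longrightarrow>
           P8_obj \<upsilon> Pb h Tc B \<sigma>2 l t < P8_obj \<upsilon> Pb h Tc B \<sigma>2 l (min t0 Tc)"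
proof -
  define K where "K = ln 2 * l / B"
  have t0: "t0 = K / (1 + w)" by (simp add: t0_def K_def)
  have obj: "P8_obj \<upsilon> Pb h Tc B \<sigma>2 l t = \<upsilon> * Pb * h * Tc - \<sigma>2 / h * scaled_tx_cost w K t" for t
    unfolding K_def by (rule P8_obj_eq_scaled_tx_cost[OF assms(3)])
  have cost_t0: "scaled_tx_cost w K t0 = K * exp (w + 1)"
    unfolding t0 using assms(1) by (intro scaled_tx_cost_at_opt) simp
  then show "P8_obj \<upsilon> Pb h Tc B \<sigma>2 l t0 = \<upsilon> * Pb * h * Tc - \<sigma>2 * ln 2 / (B * h) * exp (w + 1) * l"
    by (simp add: obj K_def ac_simps)
  show "P8_obj \<upsilon> Pb h Tc B \<sigma>2 l t \<le> P8_obj \<upsilon> Pb h Tc B \<sigma>2 l t0" if "0 < t"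
    using mult_left_mono[OF scaled_tx_cost_lower_bound(1)[OF that], of "\<sigma>2 / h" K w] assms(2)
    by (simp add: obj cost_t0)
  show "P8_obj \<upsilon> Pb h Tc B \<sigma>2 l t < P8_obj \<upsilon> Pb h Tc B \<sigma>2 l (min t0 Tc)"
    if "0 < t" "t \<le> Tc" "t \<noteq> min t0 Tc"
    using mult_strict_left_mono[OF scaled_tx_cost_min_on_interval[OF assms(1) that[unfolded t0]] assms(2)]
    by (simp add: obj t0)
qed

lemma P8_solution:
  assumes "0 < m" "m \<le> Tc"
    and "\<And>t. 0 < t \<Longrightarrow> t \<le> Tc \<Longrightarrow> t \<noteq> m \<Longrightarrow> P8_obj \<upsilon> Pb h Tc B \<sigma>2 l t < P8_obj \<upsilon> Pb h Tc B \<sigma>2 l m"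
  shows "0 \<le> R + P8_obj \<upsilon> Pb h Tc B \<sigma>2 l m \<Longrightarrow>
           (\<forall>t. P8_opt \<upsilon> Pb h Tc B \<sigma>2 R l t \<longleftrightarrow> t = m) \<and>
           G_off \<upsilon> Pb Tc B \<sigma>2 l R h = P8_obj \<upsilon> Pb h Tc B \<sigma>2 l m"
    and "R + P8_obj \<upsilon> Pb h Tc B \<sigma>2 l m < 0 \<Longrightarrow> \<not> (\<exists>t. P8_feasible \<upsilon> Pb h Tc B \<sigma>2 R l t)"
proof -
  have feasible: "P8_feasible \<upsilon> Pb h Tc B \<sigma>2 R l t \<longleftrightarrow>
      0 < t \<and> t \<le> Tc \<and> 0 \<le> R + P8_obj \<upsilon> Pb h Tc B \<sigma>2 l t" for t
    by (auto simp: P8_feasible_def P8_obj_def)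
  show "R + P8_obj \<upsilon> Pb h Tc B \<sigma>2 l m < 0 \<Longrightarrow> \<not> (\<exists>t. P8_feasible \<upsilon> Pb h Tc B \<sigma>2 R l t)"
    unfolding feasible using assms by force
  assume "0 \<le> R + P8_obj \<upsilon> Pb h Tc B \<sigma>2 l m"
  then have opt: "\<forall>t. P8_opt \<upsilon> Pb h Tc B \<sigma>2 R l t \<longleftrightarrow> t = m"
    unfolding P8_opt_def feasible using assms by (smt (verit))
  then show "(\<forall>t. P8_opt \<upsilon> Pb h Tc B \<sigma>2 R l t \<longleftrightarrow> t = m) \<and>
      G_off \<upsilon> Pb Tc B \<sigma>2 l R h = P8_obj \<upsilon> Pb h Tc B \<sigma>2 l m"
    by (simp add: G_off_def)
qed

theorem corollary3:
  fixes \<upsilon> Pb h Tc \<sigma>2 B R l :: real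
  assumes "0 < \<upsilon>" "\<upsilon> \<le> 1" "Pb > 0" "h > 0" "Tc > 0" "\<sigma>2 > 0" "B > 0" "R \<ge> 0" "l > 0"
  defines "w \<equiv> lambertW (\<upsilon> * Pb * h\<^sup>2 / (\<sigma>2 * exp 1) - 1 / exp 1)"
  defines "\<rho> \<equiv> ln 2 / (B * (1 + w))"
  defines "y \<equiv> \<sigma>2 * ln 2 / (B * h) * exp (w + 1)"
  defines "c \<equiv> Tc * B * (1 + w) / ln 2"
  defines "c' \<equiv> B * Tc * log 2 (1 + R * h / (\<sigma>2 * Tc))"
  defines "thr \<equiv> B * Tc * y / ln 2 - \<sigma>2 / h * Tc"
  shows
    "(((R \<le> thr \<and> l \<le> (\<upsilon> * Pb * h * Tc + R) / y) \<or> (R > thr \<and> l < c)) \<longrightarrow>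
        (\<forall>t. P8_opt \<upsilon> Pb h Tc B \<sigma>2 R l t \<longleftrightarrow> t = \<rho> * l) \<and>
        G_off \<upsilon> Pb Tc B \<sigma>2 l R h = \<upsilon> * Pb * h * Tc - y * l)
     \<and> ((R > thr \<and> c \<le> l \<and> l \<le> c') \<longrightarrow>
        (\<forall>t. P8_opt \<upsilon> Pb h Tc B \<sigma>2 R l t \<longleftrightarrow> t = Tc) \<and>
        G_off \<upsilon> Pb Tc B \<sigma>2 l R h = - (2 powr (l / (B * Tc)) - 1) * (\<sigma>2 / h) * Tc)
     \<and> (\<not> ((R \<le> thr \<and> l \<le> (\<upsilon> * Pb * h * Tc + R) / y) \<or> (R > thr \<and> l < c)
           \<or> (R > thr \<and> c \<le> l \<and> l \<le> c')) \<longrightarrow>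
        \<not> (\<exists>t. P8_feasible \<upsilon> Pb h Tc B \<sigma>2 R l t))"
proof -
  let ?obj = "P8_obj \<upsilon> Pb h Tc B \<sigma>2 l"
  define m where "m = min (\<rho> * l) Tc"
  have "0 < \<upsilon> * Pb" "0 < \<sigma>2 / h" using assms by simp_all
  note W = P8_lambert_parameter[OF \<open>0 < \<upsilon> * Pb\<close> \<open>0 < h\<close> \<open>0 < \<sigma>2\<close>, folded w_def]
  note max = P8_obj_maximum[OF W(1) \<open>0 < \<sigma>2 / h\<close> W(2), where Tc=Tc and B=B and l=l, folded \<rho>_def y_def]
  have "0 < y" "0 < 1 + w" using W(1) assms by (simp_all add: y_def)
  then have "0 < \<rho> * l" using assms by (simp add: \<rho>_def)
  then have "0 < m" "m \<le> Tc" using assms by (simp_all add: m_def)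
  note solution = P8_solution[OF this max(3)[folded m_def]]
  have "\<rho> * l \<le> Tc \<longleftrightarrow> l \<le> c" "Tc \<le> \<rho> * l \<longleftrightarrow> c \<le> l"
    using mult_pos_pos[OF \<open>0 < B\<close> \<open>0 < 1 + w\<close>] by (simp_all add: \<rho>_def c_def field_simps)
  then have m_opt: "l \<le> c \<Longrightarrow> m = \<rho> * l" and m_Tc: "c \<le> l \<Longrightarrow> m = Tc"
    by (simp_all add: m_def)
  have feasible_opt: "0 \<le> R + ?obj (\<rho> * l) \<longleftrightarrow> l \<le> (\<upsilon> * Pb * h * Tc + R) / y"
    using \<open>0 < y\<close> by (simp add: max(1) field_simps)
  have feasible_Tc: "0 \<le> R + ?obj Tc \<longleftrightarrow> l \<le> c'"
    unfolding c'_def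
    using \<open>0 < h\<close> \<open>0 < Tc\<close> \<open>0 < \<sigma>2\<close> \<open>0 < B\<close> \<open>0 \<le> R\<close> by (rule P8_feasible_full_time_iff)
  have "\<upsilon> * Pb * h * Tc + thr = y * c"
    unfolding thr_def y_def c_def W(2) using \<open>0 < h\<close> \<open>0 < B\<close> by (simp add: field_simps)
  then have thr: "R \<le> thr \<longleftrightarrow> (\<upsilon> * Pb * h * Tc + R) / y \<le> c"
    using \<open>0 < y\<close> by (simp add: pos_divide_le_eq mult.commute) linarith
  have case1: "m = \<rho> * l \<and> 0 \<le> R + ?obj m"
    if "(R \<le> thr \<and> l \<le> (\<upsilon> * Pb * h * Tc + R) / y) \<or> (R > thr \<and> l < c)"
    using that thr m_opt feasible_opt by auto
  have case2: "m = Tc \<and> 0 \<le> R + ?obj m" if "R > thr \<and> c \<le> l \<and> l \<le> c'"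
    using that m_Tc feasible_Tc by auto
  have case3: "R + ?obj m < 0"
    if "\<not> ((R \<le> thr \<and> l \<le> (\<upsilon> * Pb * h * Tc + R) / y) \<or> (R > thr \<and> l < c)
           \<or> (R > thr \<and> c \<le> l \<and> l \<le> c'))"
    using that thr m_Tc feasible_opt feasible_Tc max(2)[OF \<open>0 < m\<close>] by fastforce
  show ?thesis
    using case1 case2 case3 solution max(1) P8_obj_full_time by auto
qed

end
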